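(* Let $\mathfrak g$ be a finite-dimensional Lie algebra over a field $\mathbb K$ of characteristic zero and $\mathfrak h\subset\mathfrak g$ a nonzero commutative ideal. Then $$\dim_{\mathbb K(\mathfrak h^* )}L_{\mathfrak h}=\dim_{\mathbb K}\mathrm{St}(h)-\dim_{\mathbb K}\mathfrak h+1,$$ where $\mathrm{St}(h)$ is the stationary subalgebra of a generic $h\in\mathfrak h^*$.
   Context: $\pi:\mathfrak g^*\to\mathfrak h^*$ is restriction. For $h\in\mathfrak h^*$, $\mathrm{St}(h)=\{\xi\in\mathfrak g\mid\langle h,[\xi,\eta]\rangle=0\ \forall\eta\in\mathfrak h\}$ (stationary subalgebra for the representation of $\mathfrak g$ on $\mathfrak h^*$ dual to $\operatorname{ad}|_{\mathfrak h}$). $\mathbb K(\mathfrak h^* )=\operatorname{Frac}S(\mathfrak h)$ is the field of rational functions on $\mathfrak h^*$. A rational section is a rational map $\Psi:\mathfrak h^*\to\mathfrak g$ with $\Psi(h)\in\mathrm{St}(h)$ for generic $h$; these form a $\mathbb K(\mathfrak h^* )$-vector space (and Lie algebra with $[\Psi_1,\Psi_2](h)=[\Psi_1(h),\Psi_2(h)]$). $L_{\mathfrak h}$ is the set of rational functions $f_\Psi(x)=\langle x,\Psi(\pi(x))\rangle$ on $\mathfrak g^*$, $\Psi$ a rational section; it is a vector space (indeed a Lie algebra under the Lie–Poisson bracket) over $\mathbb K(\mathfrak h^* )$. *)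

theory Defs
  imports Complex_Main
begin

definition lie_algebra :: "('k::field \<Rightarrow> 'g::ab_group_add \<Rightarrow> 'g) \<Rightarrow> ('g \<Rightarrow> 'g \<Rightarrow> 'g) \<Rightarrow> bool" where
  "lie_algebra scale br \<longleftrightarrow> vector_space scale \<and>
     (\<forall>x y z. br (x + y) z = br x z + br y z) \<and>
     (\<forall>x y z. br x (y + z) = br x y + br x z) \<and>
     (\<forall>c x y. br (scale c x) y = scale c (br x y)) \<and>
     (\<forall>c x y. br x (scale c y) = scale c (br x y)) \<and>
     (\<forall>x. br x x = 0) \<and>
     (\<forall>x y z. br x (br y z) + br y (br z x) + br z (br x y) = 0)"

definition finite_dim :: "('k::field \<Rightarrow> 'g::ab_group_add \<Rightarrow> 'g) \<Rightarrow> bool" where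
  "finite_dim scale \<longleftrightarrow> (\<exists>B. finite B \<and> module.span scale B = UNIV)"

text \<open>The dual V* of a subspace V, realised as functionals linear on V and zero off V.
  For V = UNIV this is g*; for V = h it is h*.\<close>
definition dualsp :: "('k::field \<Rightarrow> 'g::ab_group_add \<Rightarrow> 'g) \<Rightarrow> 'g set \<Rightarrow> ('g \<Rightarrow> 'k) set" where
  "dualsp scale V = {l. (\<forall>a\<in>V. \<forall>b\<in>V. l (a + b) = l a + l b) \<and>
                       (\<forall>c. \<forall>a\<in>V. l (scale c a) = c * l a) \<and>
                       (\<forall>v. v \<notin> V \<longrightarrow> l v = 0)}"

text \<open>Polynomial functions on V* (the image of S(V)): generated by constants and
  evaluations at vectors of V under sums and products.\<close>
inductive_set polyfun :: "'g set \<Rightarrow> (('g \<Rightarrow> 'k::comm_ring_1) \<Rightarrow> 'k) set" for V where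
  const: "(\<lambda>l. c) \<in> polyfun V"
| eval: "v \<in> V \<Longrightarrow> (\<lambda>l. l v) \<in> polyfun V"
| add: "p \<in> polyfun V \<Longrightarrow> q \<in> polyfun V \<Longrightarrow> (\<lambda>l. p l + q l) \<in> polyfun V"
| mult: "p \<in> polyfun V \<Longrightarrow> q \<in> polyfun V \<Longrightarrow> (\<lambda>l. p l * q l) \<in> polyfun V"

text \<open>P holds for generic l in V*: on a nonempty Zariski-open subset.\<close>
definition generic :: "('k::field \<Rightarrow> 'g::ab_group_add \<Rightarrow> 'g) \<Rightarrow> 'g set \<Rightarrow> (('g \<Rightarrow> 'k) \<Rightarrow> bool) \<Rightarrow> bool" where
  "generic scale V P \<longleftrightarrow> (\<exists>Q\<in>polyfun V. (\<exists>l\<in>dualsp scale V. Q l \<noteq> 0) \<and>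
                            (\<forall>l\<in>dualsp scale V. Q l \<noteq> 0 \<longrightarrow> P l))"

text \<open>Rational functions on V* (element of K(V*), given by a representative).\<close>
definition ratfun :: "('k::field \<Rightarrow> 'g::ab_group_add \<Rightarrow> 'g) \<Rightarrow> 'g set \<Rightarrow> (('g \<Rightarrow> 'k) \<Rightarrow> 'k) \<Rightarrow> bool" where
  "ratfun scale V \<phi> \<longleftrightarrow> (\<exists>p\<in>polyfun V. \<exists>q\<in>polyfun V. (\<exists>l\<in>dualsp scale V. q l \<noteq> 0) \<and>
       (\<forall>l\<in>dualsp scale V. q l \<noteq> 0 \<longrightarrow> \<phi> l = p l / q l))"

definition ratmap :: "('k::field \<Rightarrow> 'g::ab_group_add \<Rightarrow> 'g) \<Rightarrow> 'g set \<Rightarrow> (('g \<Rightarrow> 'k) \<Rightarrow> 'g) \<Rightarrow> bool" where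
  "ratmap scale V \<Psi> \<longleftrightarrow> (\<exists>q\<in>polyfun V. \<exists>ps vs. length ps = length vs \<and> set ps \<subseteq> polyfun V \<and>
       (\<exists>l\<in>dualsp scale V. q l \<noteq> 0) \<and>
       (\<forall>l\<in>dualsp scale V. q l \<noteq> 0 \<longrightarrow>
           \<Psi> l = scale (inverse (q l)) (\<Sum>i<length ps. scale ((ps ! i) l) (vs ! i))))"

definition stab :: "('g \<Rightarrow> 'g \<Rightarrow> 'g) \<Rightarrow> 'g set \<Rightarrow> ('g \<Rightarrow> 'k::zero) \<Rightarrow> 'g set" where
  "stab br h l = {\<xi>. \<forall>\<eta>\<in>h. l (br \<xi> \<eta>) = 0}"

definition rat_section :: "('k::field \<Rightarrow> 'g::ab_group_add \<Rightarrow> 'g) \<Rightarrow> ('g \<Rightarrow> 'g \<Rightarrow> 'g) \<Rightarrow> 'g set \<Rightarrow> (('g \<Rightarrow> 'k) \<Rightarrow> 'g) \<Rightarrow> bool" where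
  "rat_section scale br h \<Psi> \<longleftrightarrow> ratmap scale h \<Psi> \<and> generic scale h (\<lambda>l. \<Psi> l \<in> stab br h l)"

definition restr :: "'g set \<Rightarrow> ('g \<Rightarrow> 'k::zero) \<Rightarrow> ('g \<Rightarrow> 'k)" where
  "restr h x = (\<lambda>v. if v \<in> h then x v else 0)"

definition fPsi :: "'g set \<Rightarrow> (('g \<Rightarrow> 'k::zero) \<Rightarrow> 'g) \<Rightarrow> ('g \<Rightarrow> 'k) \<Rightarrow> 'k" where
  "fPsi h \<Psi> x = x (\<Psi> (restr h x))"

text \<open>dim over K(h*) of L_h equals n: there are rational sections \<Psi>_1..\<Psi>_n whose
  functions f_\<Psi>_i form a K(h*)-basis of L_h (K(h*) acting through \<pi>; functions on g*
  identified when equal generically).\<close>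
definition L_dim_eq :: "('k::field \<Rightarrow> 'g::ab_group_add \<Rightarrow> 'g) \<Rightarrow> ('g \<Rightarrow> 'g \<Rightarrow> 'g) \<Rightarrow> 'g set \<Rightarrow> nat \<Rightarrow> bool" where
  "L_dim_eq scale br h n \<longleftrightarrow> (\<exists>\<Psi>s. length \<Psi>s = n \<and> (\<forall>\<Psi>\<in>set \<Psi>s. rat_section scale br h \<Psi>) \<and>
     (\<forall>\<phi>s. length \<phi>s = n \<longrightarrow> (\<forall>\<phi>\<in>set \<phi>s. ratfun scale h \<phi>) \<longrightarrow>
        generic scale UNIV (\<lambda>x. (\<Sum>i<n. (\<phi>s ! i) (restr h x) * fPsi h (\<Psi>s ! i) x) = 0) \<longrightarrow>
        (\<forall>i<n. generic scale h (\<lambda>l. (\<phi>s ! i) l = 0))) \<and>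
     (\<forall>\<Psi>. rat_section scale br h \<Psi> \<longrightarrow>
        (\<exists>\<phi>s. length \<phi>s = n \<and> (\<forall>\<phi>\<in>set \<phi>s. ratfun scale h \<phi>) \<and>
           generic scale UNIV (\<lambda>x. fPsi h \<Psi> x = (\<Sum>i<n. (\<phi>s ! i) (restr h x) * fPsi h (\<Psi>s ! i) x)))))"

end

theory Submission
  imports Defs "Jordan_Normal_Form.Determinant" "HOL-Library.Function_Algebras"
begin

text \<open>Choose a basis b_0, ..., b_(N-1) of g whose first m vectors span h and whose first d
  vectors span St(l0) for a generic l0. Since St(l0) is the kernel of the pairing
  (xi, eta) |-> l0 [xi, eta] between g and h, there are eta_0, ..., eta_(r-1) in h dual to the
  remaining basis vectors, and the matrix M(l) = (l [b_(d+j), eta_k]) is polynomial in l and equal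
  to the identity at l0. Where det M(l) is nonzero, an element of g is determined by its first d
  coordinates and its pairings with the eta_k; where moreover dim St(l) = d, Cramer's rule produces
  polynomial sections xi_j(l) of St(l) whose first d coordinates are det M(l) times those of b_j.
  The constant section b_0 and xi_m, ..., xi_(d-1) form a basis of L_h: every section decomposes
  along them because its h-component pairs with x only through the restriction l of x to h, and a
  relation must be trivial because translating x by the coordinate functional of b_j, j >= m,
  fixes l and isolates the coefficient of xi_j.\<close>

section \<open>Polynomial and rational functions on a dual space\<close>

lemma polyfun_sum:
  assumes "finite A" "\<And>i. i \<in> A \<Longrightarrow> f i \<in> polyfun V"
  shows "(\<lambda>l. \<Sum>i\<in>A. f i l) \<in> polyfun V"
  using assms
proof (induction A rule: finite_induct)
  case empty then show ?case using polyfun.const[of 0 V] by simp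
next
  case (insert x F)
  then show ?case using polyfun.add[of "f x" V "\<lambda>l. \<Sum>i\<in>F. f i l"] by simp
qed

lemma polyfun_prod:
  assumes "finite A" "\<And>i. i \<in> A \<Longrightarrow> f i \<in> polyfun V"
  shows "(\<lambda>l. \<Prod>i\<in>A. f i l) \<in> polyfun V"
  using assms
proof (induction A rule: finite_induct)
  case empty then show ?case using polyfun.const[of 1 V] by simp
next
  case (insert x F)
  then show ?case using polyfun.mult[of "f x" V "\<lambda>l. \<Prod>i\<in>F. f i l"] by simp
qed

lemma polyfun_cmult: "p \<in> polyfun V \<Longrightarrow> (\<lambda>l. c * p l) \<in> polyfun V"
  using polyfun.mult[OF polyfun.const] by blast

lemma polyfun_restr:
  assumes "p \<in> polyfun h"
  shows "(\<lambda>x. p (restr h x)) \<in> polyfun UNIV"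
  using assms
  by induction (auto simp: restr_def intro: polyfun.intros)

lemma polyfun_translate:
  assumes "p \<in> polyfun V"
  shows "(\<lambda>x. p (\<lambda>v. x v + e v)) \<in> polyfun V"
  using assms
  by induction (auto intro: polyfun.intros)

lemma polyfun_on_line:
  fixes p :: "('g \<Rightarrow> 'k::comm_ring_1) \<Rightarrow> 'k"
  assumes "p \<in> polyfun V"
  shows "\<exists>P. \<forall>t. p (\<lambda>v. a v + t * (b v - a v)) = poly P t"
  using assms
proof induction
  case (const c) then show ?case by (intro exI[of _ "[:c:]"]) simp
next
  case (eval v) then show ?case by (intro exI[of _ "[:a v, b v - a v:]"]) (simp add: algebra_simps)
next
  case (add p q)
  then obtain P Q where "\<forall>t. p (\<lambda>v. a v + t * (b v - a v)) = poly P t"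
     "\<forall>t. q (\<lambda>v. a v + t * (b v - a v)) = poly Q t" by blast
  then show ?case by (intro exI[of _ "P + Q"]) simp
next
  case (mult p q)
  then obtain P Q where "\<forall>t. p (\<lambda>v. a v + t * (b v - a v)) = poly P t"
     "\<forall>t. q (\<lambda>v. a v + t * (b v - a v)) = poly Q t" by blast
  then show ?case by (intro exI[of _ "P * Q"]) simp
qed

lemma polyfun_det:
  assumes car: "\<And>l. F l \<in> carrier_mat n n"
    and ent: "\<And>i j. i < n \<Longrightarrow> j < n \<Longrightarrow> (\<lambda>l. F l $$ (i,j)) \<in> polyfun V"
  shows "(\<lambda>l. det (F l)) \<in> polyfun V"
proof -
  have "(\<lambda>l. det (F l)) = (\<lambda>l. \<Sum>p\<in>{p. p permutes {0..<n}}. signof p * (\<Prod>i = 0..<n. F l $$ (i, p i)))"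
    using det_def'[OF car] by auto
  moreover have "(\<lambda>l. \<Prod>i = 0..<n. F l $$ (i, p i)) \<in> polyfun V" if "p permutes {0..<n}" for p
    using that ent by (intro polyfun_prod) (auto simp: permutes_in_image)
  ultimately show ?thesis
    by (auto intro!: polyfun_sum polyfun_cmult finite_permutations)
qed

lemma polyfun_adj_mat:
  assumes car: "\<And>l. F l \<in> carrier_mat n n"
    and ent: "\<And>i j. i < n \<Longrightarrow> j < n \<Longrightarrow> (\<lambda>l. F l $$ (i,j)) \<in> polyfun V"
    and ij: "i < n" "j < n"
  shows "(\<lambda>l. adj_mat (F l) $$ (i,j)) \<in> polyfun V"
proof -
  have dims: "dim_row (F l) = n" "dim_col (F l) = n" for l using car[of l] by auto
  have "(\<lambda>l. det (mat_delete (F l) j i)) \<in> polyfun V"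
  proof (rule polyfun_det[of _ "n - 1"])
    show "mat_delete (F l) j i \<in> carrier_mat (n - 1) (n - 1)" for l
      using mat_delete_carrier[OF car[of l]] .
    fix a b assume ab: "a < n - 1" "b < n - 1"
    have "(\<lambda>l. mat_delete (F l) j i $$ (a, b)) =
      (\<lambda>l. F l $$ (if a < j then a else Suc a, if b < i then b else Suc b))"
      using ab by (auto simp: mat_delete_def dims)
    then show "(\<lambda>l. mat_delete (F l) j i $$ (a, b)) \<in> polyfun V" using ent ab by simp
  qed
  then show ?thesis
    using polyfun_cmult ij by (simp add: adj_mat_def cofactor_def dims)
qed

lemma dualsp_zero: "(\<lambda>v. 0) \<in> dualsp scale V"
  by (simp add: dualsp_def)

lemma dualsp_add: "l \<in> dualsp scale V \<Longrightarrow> a \<in> V \<Longrightarrow> b \<in> V \<Longrightarrow> l (a + b) = l a + l b"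
  by (simp add: dualsp_def)

lemma dualsp_scale: "l \<in> dualsp scale V \<Longrightarrow> a \<in> V \<Longrightarrow> l (scale c a) = c * l a"
  by (simp add: dualsp_def)

lemma dualsp_outside: "l \<in> dualsp scale V \<Longrightarrow> a \<notin> V \<Longrightarrow> l a = 0"
  by (simp add: dualsp_def)

lemma dualsp_segment:
  assumes "a \<in> dualsp scale V" "b \<in> dualsp scale V"
  shows "(\<lambda>v. a v + t * (b v - a v)) \<in> dualsp scale V"
  using assms unfolding dualsp_def by (auto simp: algebra_simps)

lemma dualsp_sum:
  assumes l: "l \<in> dualsp scale V" and V: "module.subspace scale V" and mod: "Modules.module scale"
    and "finite A" and "\<And>i. i \<in> A \<Longrightarrow> v i \<in> V"
  shows "l (\<Sum>i\<in>A. scale (c i) (v i)) = (\<Sum>i\<in>A. c i * l (v i))"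
  using \<open>finite A\<close> \<open>\<And>i. i \<in> A \<Longrightarrow> v i \<in> V\<close>
proof (induction A rule: finite_induct)
  case empty
  have "0 \<in> V" using V mod by (simp add: module.subspace_0)
  then show ?case using dualsp_scale[OF l, of 0 0] mod by (simp add: module.scale_zero_left)
next
  case (insert x F)
  have "(\<Sum>i\<in>F. scale (c i) (v i)) \<in> V" "scale (c x) (v x) \<in> V"
    using insert by (auto intro!: module.subspace_sum[OF mod V] module.subspace_scale[OF mod V])
  then show ?case
    using insert dualsp_add[OF l] dualsp_scale[OF l] by simp
qed

definition nonzero_polyfun ::
    "('k::field \<Rightarrow> 'g::ab_group_add \<Rightarrow> 'g) \<Rightarrow> 'g set \<Rightarrow> (('g \<Rightarrow> 'k) \<Rightarrow> 'k) \<Rightarrow> bool"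
  where "nonzero_polyfun scale V p \<longleftrightarrow> p \<in> polyfun V \<and> (\<exists>l\<in>dualsp scale V. p l \<noteq> 0)"

lemma nonzero_polyfun_const: "c \<noteq> 0 \<Longrightarrow> nonzero_polyfun scale V (\<lambda>l. c)"
  using dualsp_zero by (auto simp: nonzero_polyfun_def intro: polyfun.const)

text \<open>Over an infinite field, a polynomial nonvanishing at a and one nonvanishing at b
  have a nonvanishing product somewhere on the line through a and b.\<close>
lemma nonzero_polyfun_mult:
  fixes p q :: "('g::ab_group_add \<Rightarrow> 'k::field_char_0) \<Rightarrow> 'k"
  assumes "nonzero_polyfun scale V p" "nonzero_polyfun scale V q"
  shows "nonzero_polyfun scale V (\<lambda>l. p l * q l)"
proof -
  obtain a b where p: "p \<in> polyfun V" "a \<in> dualsp scale V" "p a \<noteq> 0"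
    and q: "q \<in> polyfun V" "b \<in> dualsp scale V" "q b \<noteq> 0"
    using assms by (auto simp: nonzero_polyfun_def)
  obtain P where P: "\<forall>t. p (\<lambda>v. a v + t * (b v - a v)) = poly P t" using polyfun_on_line[OF p(1)] by blast
  obtain Q where Q: "\<forall>t. q (\<lambda>v. a v + t * (b v - a v)) = poly Q t" using polyfun_on_line[OF q(1)] by blast
  have "P \<noteq> 0" using P[rule_format, of 0] p by auto
  moreover have "Q \<noteq> 0" using Q[rule_format, of 1] q by auto
  ultimately have "finite {t. poly (P * Q) t = 0}" by (intro poly_roots_finite) simp
  then obtain t where "poly (P * Q) t \<noteq> 0"
    using infinite_UNIV_char_0 by (metis (mono_tags) UNIV_I finite_subset mem_Collect_eq subsetI)
  then show ?thesis
    using P Q dualsp_segment[OF p(2) q(2), of t] p(1) q(1)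
    by (auto simp: nonzero_polyfun_def intro!: polyfun.mult bexI[of _ "\<lambda>v. a v + t * (b v - a v)"])
qed

lemma generic_iff:
  "generic scale V P \<longleftrightarrow> (\<exists>p. nonzero_polyfun scale V p \<and> (\<forall>l\<in>dualsp scale V. p l \<noteq> 0 \<longrightarrow> P l))"
  by (auto simp: generic_def nonzero_polyfun_def)

lemma genericI:
  "nonzero_polyfun scale V p \<Longrightarrow> (\<And>l. l \<in> dualsp scale V \<Longrightarrow> p l \<noteq> 0 \<Longrightarrow> P l) \<Longrightarrow> generic scale V P"
  by (auto simp: generic_iff)

lemma genericE:
  assumes "generic scale V P"
  obtains p where "nonzero_polyfun scale V p" "\<And>l. l \<in> dualsp scale V \<Longrightarrow> p l \<noteq> 0 \<Longrightarrow> P l"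
  using assms by (auto simp: generic_iff)

lemma generic_mono:
  "generic scale V P \<Longrightarrow> (\<And>l. l \<in> dualsp scale V \<Longrightarrow> P l \<Longrightarrow> Q l) \<Longrightarrow> generic scale V Q"
  unfolding generic_def by blast

lemma generic_conj:
  fixes scale :: "'k::field_char_0 \<Rightarrow> 'g::ab_group_add \<Rightarrow> 'g"
  assumes "generic scale V P" "generic scale V Q"
  shows "generic scale V (\<lambda>l. P l \<and> Q l)"
proof -
  obtain p q where "nonzero_polyfun scale V p" "\<And>l. l \<in> dualsp scale V \<Longrightarrow> p l \<noteq> 0 \<Longrightarrow> P l"
    "nonzero_polyfun scale V q" "\<And>l. l \<in> dualsp scale V \<Longrightarrow> q l \<noteq> 0 \<Longrightarrow> Q l"
    using assms by (metis genericE)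
  then show ?thesis
    by (intro genericI[of scale V "\<lambda>l. p l * q l"] nonzero_polyfun_mult) auto
qed

lemma generic_Ball:
  fixes scale :: "'k::field_char_0 \<Rightarrow> 'g::ab_group_add \<Rightarrow> 'g"
  assumes "finite A" "\<And>t. t \<in> A \<Longrightarrow> generic scale V (P t)"
  shows "generic scale V (\<lambda>l. \<forall>t\<in>A. P t l)"
  using assms
proof (induction A rule: finite_induct)
  case empty
  show ?case by (rule genericI[OF nonzero_polyfun_const[of 1]]) auto
next
  case (insert x F)
  then have "generic scale V (\<lambda>l. P x l \<and> (\<forall>t\<in>F. P t l))" by (intro generic_conj) auto
  then show ?case by (rule generic_mono) auto
qed

lemma ratfun_iff:
  "ratfun scale V \<phi> \<longleftrightarrow> (\<exists>p\<in>polyfun V. \<exists>q. nonzero_polyfun scale V q \<and>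
     (\<forall>l\<in>dualsp scale V. q l \<noteq> 0 \<longrightarrow> \<phi> l = p l / q l))"
  by (auto simp: ratfun_def nonzero_polyfun_def)

lemma ratfunI:
  "p \<in> polyfun V \<Longrightarrow> nonzero_polyfun scale V q \<Longrightarrow> ratfun scale V (\<lambda>l. p l / q l)"
  by (auto simp: ratfun_iff)

lemma mat_mult_adj_mat_entry:
  assumes A: "A \<in> carrier_mat n n" and k: "k < n" "k' < n"
  shows "(\<Sum>i<n. A $$ (k,i) * adj_mat A $$ (i,k')) = (if k = k' then det A else 0)"
proof -
  have "(A * adj_mat A) $$ (k,k') = (det A \<cdot>\<^sub>m 1\<^sub>m n) $$ (k,k')" using adj_mat(2)[OF A] by simp
  then show ?thesis
    using A adj_mat(1)[OF A] k by (simp add: scalar_prod_def atLeast0LessThan)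
qed

lemma adj_mat_mult_mat_entry:
  assumes A: "A \<in> carrier_mat n n" and k: "k < n" "k' < n"
  shows "(\<Sum>i<n. adj_mat A $$ (k,i) * A $$ (i,k')) = (if k = k' then det A else 0)"
proof -
  have "(adj_mat A * A) $$ (k,k') = (det A \<cdot>\<^sub>m 1\<^sub>m n) $$ (k,k')" using adj_mat(3)[OF A] by simp
  then show ?thesis
    using A adj_mat(1)[OF A] k by (simp add: scalar_prod_def atLeast0LessThan)
qed

lemma sum_fun_apply: "(\<Sum>i\<in>A. f i) x = (\<Sum>i\<in>A. f i x)"
  by (induction A rule: infinite_finite_induct) auto

lemma sum_delta_mult:
  fixes c :: "'a::comm_semiring_1"
  assumes "finite A" "x \<in> A"
  shows "(\<Sum>k\<in>A. (if x = k then c else 0) * f k) = c * f x"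
proof -
  have "(\<Sum>k\<in>A. (if x = k then c else 0) * f k) = (\<Sum>k\<in>A. if x = k then c * f k else 0)"
    by (rule sum.cong) auto
  then show ?thesis using assms by simp
qed

lemma (in vector_space) flag_basis_list:
  assumes B: "finite B" "span B = UNIV" and U: "subspace U" and V: "subspace V" "U \<subseteq> V"
  obtains bs where "distinct bs" "independent (set bs)" "span (set bs) = UNIV"
    "span (set (take (dim U) bs)) = U" "span (set (take (dim V) bs)) = V"
    "dim U \<le> dim V" "dim V \<le> length bs"
proof -
  obtain BU where BU: "BU \<subseteq> U" "independent BU" "U \<subseteq> span BU" "card BU = dim U"
    using basis_exists by blast
  have BUV: "BU \<subseteq> V" using BU(1) V(2) by blast
  obtain BV where BV: "BU \<subseteq> BV" "BV \<subseteq> V" "independent BV" "V \<subseteq> span BV"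
    by (rule maximal_independent_subset_extend[OF BUV BU(2)])
  obtain BG where BG: "BV \<subseteq> BG" "BG \<subseteq> UNIV" "independent BG" "UNIV \<subseteq> span BG"
    by (rule maximal_independent_subset_extend[OF subset_UNIV BV(3)])
  have "finite BG" using independent_span_bound[OF B(1) BG(3)] B(2) by simp
  then have fin: "finite BV" "finite BU"
    using finite_subset[OF BG(1)] finite_subset[OF BV(1)] by blast+
  obtain us where us: "distinct us" "set us = BU" using finite_distinct_list[OF fin(2)] by blast
  obtain vs where vs: "distinct vs" "set vs = BV - BU" using finite_distinct_list[OF finite_Diff[OF fin(1)]] by blast
  obtain gs where gs: "distinct gs" "set gs = BG - BV" using finite_distinct_list[OF finite_Diff[OF \<open>finite BG\<close>]] by blast
  have set_bs: "set (us @ vs @ gs) = BG" and set_take: "set (us @ vs) = BV"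
    using us vs gs BV(1) BG(1) by auto
  have len_us: "length us = dim U" using distinct_card[OF us(1)] us(2) BU(4) by simp
  have "card BV = card BU + card (BV - BU)"
    using card_Diff_subset[OF fin(2) BV(1)] card_mono[OF fin(1) BV(1)] by simp
  then have "card BV = length us + length vs"
    using distinct_card[OF us(1)] distinct_card[OF vs(1)] us(2) vs(2) by simp
  then have len_vs: "length us + length vs = dim V" using basis_card_eq_dim[OF BV(2,4,3)] by simp
  show ?thesis
  proof
    show "distinct (us @ vs @ gs)" using us vs gs BV(1) by auto
    show "independent (set (us @ vs @ gs))" using BG(3) set_bs by simp
    show "span (set (us @ vs @ gs)) = UNIV" using BG(4) set_bs by auto
    show "span (set (take (dim U) (us @ vs @ gs))) = U"
      using len_us us BU span_minimal[OF BU(1) U] by auto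
    have "take (dim V) (us @ vs @ gs) = us @ vs" using len_vs by simp
    then show "span (set (take (dim V) (us @ vs @ gs))) = V"
      using set_take BV span_minimal[OF BV(2) V(1)] by auto
  qed (use len_us len_vs in auto)
qed

section \<open>Abelian ideals and adapted bases\<close>

locale abelian_ideal = vector_space scale
  for scale :: "'k::field_char_0 \<Rightarrow> 'g::ab_group_add \<Rightarrow> 'g" (infixr \<open>*s\<close> 75) +
  fixes br :: "'g \<Rightarrow> 'g \<Rightarrow> 'g" and h :: "'g set"
  assumes lie: "lie_algebra scale br"
    and subspace_h: "subspace h"
    and ideal: "\<forall>\<xi>. \<forall>\<eta>\<in>h. br \<xi> \<eta> \<in> h"
    and abelian: "\<forall>a\<in>h. \<forall>b\<in>h. br a b = 0"
begin

lemma br_add_left: "br (x + y) z = br x z + br y z" using lie by (simp add: lie_algebra_def)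
lemma br_add_right: "br x (y + z) = br x y + br x z" using lie by (simp add: lie_algebra_def)
lemma br_scale_left: "br (c *s x) y = c *s br x y" using lie by (simp add: lie_algebra_def)
lemma br_scale_right: "br x (c *s y) = c *s br x y" using lie by (simp add: lie_algebra_def)
lemma br_zero_left [simp]: "br 0 y = 0" using br_add_left[of 0 0 y] by simp
lemma br_zero_right [simp]: "br x 0 = 0" using br_add_right[of x 0 0] by simp
lemma br_sum_left: "br (\<Sum>i\<in>A. f i) z = (\<Sum>i\<in>A. br (f i) z)"
  by (induction A rule: infinite_finite_induct) (auto simp: br_add_left)
lemma br_sum_right: "br z (\<Sum>i\<in>A. f i) = (\<Sum>i\<in>A. br z (f i))"
  by (induction A rule: infinite_finite_induct) (auto simp: br_add_right)

lemma br_in_h: "\<eta> \<in> h \<Longrightarrow> br \<xi> \<eta> \<in> h"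
  using ideal by blast

lemma dualsp_zero_at_0: "l \<in> dualsp scale h \<Longrightarrow> l 0 = 0"
  using dualsp_scale[of l scale h 0 0] subspace_0[OF subspace_h] by simp

lemma dualsp_sum_h:
  "l \<in> dualsp scale h \<Longrightarrow> finite A \<Longrightarrow> (\<And>i. i \<in> A \<Longrightarrow> v i \<in> h) \<Longrightarrow>
    l (\<Sum>i\<in>A. c i *s v i) = (\<Sum>i\<in>A. c i * l (v i))"
  using dualsp_sum[OF _ subspace_h] module_axioms by blast

lemma dualsp_sum_UNIV:
  "x \<in> dualsp scale UNIV \<Longrightarrow> finite A \<Longrightarrow> x (\<Sum>i\<in>A. c i *s v i) = (\<Sum>i\<in>A. c i * x (v i))"
  using dualsp_sum[OF _ subspace_UNIV module_axioms] by blast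

lemma subspace_stab:
  assumes l: "l \<in> dualsp scale h" and E: "E \<subseteq> h"
  shows "subspace (stab br E l)"
  unfolding subspace_def stab_def
proof (intro conjI allI ballI impI CollectI)
  fix \<eta> show "l (br 0 \<eta>) = 0" using dualsp_zero_at_0[OF l] by simp
next
  fix x y \<eta> assume "x \<in> {\<xi>. \<forall>\<eta>\<in>E. l (br \<xi> \<eta>) = 0}" "y \<in> {\<xi>. \<forall>\<eta>\<in>E. l (br \<xi> \<eta>) = 0}" "\<eta> \<in> E"
  then show "l (br (x + y) \<eta>) = 0"
    using E by (auto simp: br_add_left dualsp_add[OF l] br_in_h)
next
  fix c x \<eta> assume "x \<in> {\<xi>. \<forall>\<eta>\<in>E. l (br \<xi> \<eta>) = 0}" "\<eta> \<in> E"
  then show "l (br (c *s x) \<eta>) = 0"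
    using E by (auto simp: br_scale_left dualsp_scale[OF l] br_in_h)
qed

lemma stab_antimono: "E \<subseteq> F \<Longrightarrow> stab br F l \<subseteq> stab br E l"
  by (auto simp: stab_def)

lemma h_subset_stab: "l \<in> dualsp scale h \<Longrightarrow> E \<subseteq> h \<Longrightarrow> h \<subseteq> stab br E l"
  using abelian dualsp_zero_at_0 by (auto simp: stab_def)

lemma restr_in_dualsp: "x \<in> dualsp scale UNIV \<Longrightarrow> restr h x \<in> dualsp scale h"
  using subspace_add[OF subspace_h] subspace_scale[OF subspace_h] by (auto simp: dualsp_def restr_def)

end

locale adapted_basis = abelian_ideal scale br h
  for scale :: "'k::field_char_0 \<Rightarrow> 'g::ab_group_add \<Rightarrow> 'g" (infixr \<open>*s\<close> 75)
    and br :: "'g \<Rightarrow> 'g \<Rightarrow> 'g" and h :: "'g set" +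
  fixes bs :: "'g list" and m d N :: nat and l0 :: "'g \<Rightarrow> 'k"
  assumes distinct_bs: "distinct bs" and length_bs: "length bs = N"
    and independent_bs: "independent (set bs)" and span_bs: "span (set bs) = UNIV"
    and m_pos: "1 \<le> m" and m_le_d: "m \<le> d" and d_le_N: "d \<le> N"
    and span_take_m: "span (set (take m bs)) = h"
    and stab_l0_subset: "stab br h l0 \<subseteq> span (set (take d bs))"
    and l0_dual: "l0 \<in> dualsp scale h"
begin

definition coord :: "nat \<Rightarrow> 'g \<Rightarrow> 'k" where
  "coord i v = representation (set bs) v (bs ! i)"

lemma sum_set_bs: "(\<Sum>b\<in>set bs. g b) = (\<Sum>i<N. g (bs ! i))"
proof -
  have "bij_betw ((!) bs) {..<N} (set bs)" using bij_betw_nth[OF distinct_bs] length_bs by auto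
  then show ?thesis by (simp add: sum.reindex_bij_betw)
qed

lemma coord_expansion: "v = (\<Sum>i<N. coord i v *s bs ! i)"
  using sum_representation_eq[OF independent_bs, of v "set bs"] span_bs
  by (simp add: sum_set_bs coord_def)

lemma coord_add: "coord i (u + v) = coord i u + coord i v"
  using representation_add[OF independent_bs] span_bs by (simp add: coord_def)
lemma coord_scale: "coord i (c *s v) = c * coord i v"
  using representation_scale[OF independent_bs] span_bs by (simp add: coord_def)
lemma coord_diff: "coord i (u - v) = coord i u - coord i v"
  using representation_diff[OF independent_bs] span_bs by (simp add: coord_def)
lemma coord_zero [simp]: "coord i 0 = 0"
  using representation_zero by (simp add: coord_def)
lemma coord_sum: "coord i (\<Sum>j\<in>A. f j) = (\<Sum>j\<in>A. coord i (f j))"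
  using representation_sum[OF independent_bs, of A f] span_bs by (simp add: coord_def)
lemma coord_basis: "i < N \<Longrightarrow> j < N \<Longrightarrow> coord i (bs ! j) = (if i = j then 1 else 0)"
  using representation_basis[OF independent_bs, of "bs ! j"] length_bs distinct_bs
  by (auto simp: coord_def nth_eq_iff_index_eq)

lemma coord_eq_0_if_not_in_span:
  assumes v: "v \<in> span S" and "S \<subseteq> set bs" "bs ! i \<notin> S"
  shows "coord i v = 0"
proof -
  have "representation (set bs) v = representation S v"
    by (rule representation_extend[OF independent_bs v \<open>S \<subseteq> set bs\<close>])
  then show ?thesis using \<open>bs ! i \<notin> S\<close> representation_ne_zero unfolding coord_def by metis
qed

lemma coord_span_take:
  assumes "v \<in> span (set (take k bs))" "k \<le> i" "i < N"
  shows "coord i v = 0"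
proof (rule coord_eq_0_if_not_in_span[OF assms(1) set_take_subset])
  show "bs ! i \<notin> set (take k bs)"
    using assms(2,3) distinct_bs length_bs by (auto simp: in_set_conv_nth nth_eq_iff_index_eq)
qed

lemma coord_span_drop:
  assumes "v \<in> span (set (drop k bs))" "i < k" "i < N"
  shows "coord i v = 0"
proof (rule coord_eq_0_if_not_in_span[OF assms(1) set_drop_subset])
  show "bs ! i \<notin> set (drop k bs)"
    using assms(2,3) distinct_bs length_bs by (auto simp: in_set_conv_nth nth_eq_iff_index_eq)
qed

lemma nth_in_span_take: "i < k \<Longrightarrow> k \<le> N \<Longrightarrow> bs ! i \<in> span (set (take k bs))"
  using length_bs by (intro span_base) (auto simp: in_set_conv_nth intro!: exI[of _ i])

lemma nth_in_h: "i < m \<Longrightarrow> bs ! i \<in> h"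
  using nth_in_span_take[of i m] m_le_d d_le_N span_take_m by auto

lemma coord_h: "v \<in> h \<Longrightarrow> m \<le> i \<Longrightarrow> i < N \<Longrightarrow> coord i v = 0"
  using coord_span_take span_take_m by auto

lemma h_expansion: "v \<in> h \<Longrightarrow> v = (\<Sum>i<m. coord i v *s bs ! i)"
proof -
  assume "v \<in> h"
  then have "(\<Sum>i<N. coord i v *s bs ! i) = (\<Sum>i<m. coord i v *s bs ! i)"
    using coord_h m_le_d d_le_N by (intro sum.mono_neutral_right) auto
  then show ?thesis using coord_expansion[of v] by simp
qed

lemma sum_coord_basis:
  "i < N \<Longrightarrow> k \<le> N \<Longrightarrow> (\<Sum>j<k. a j * coord i (bs ! j)) = (if i < k then a i else 0)"
proof -
  assume "i < N" "k \<le> N"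
  then have "(\<Sum>j<k. a j * coord i (bs ! j)) = (\<Sum>j<k. if j = i then a j else 0)"
    by (intro sum.cong) (auto simp: coord_basis)
  then show ?thesis by simp
qed

definition r :: nat where "r = N - d"

definition l0_pairing :: "'g \<Rightarrow> nat \<Rightarrow> 'k" where
  "l0_pairing w = (\<lambda>i. if i < m then l0 (br w (bs ! i)) else 0)"

lemma vector_space_fun: "vector_space (\<lambda>c (v :: nat \<Rightarrow> 'k) i. c * v i)"
  by unfold_locales (auto simp: algebra_simps)

lemma linear_l0_pairing: "Vector_Spaces.linear scale (\<lambda>c v i. c * v i) l0_pairing"
  unfolding Vector_Spaces.linear_iff
proof (intro conjI allI)
  show "vector_space scale" by unfold_locales
  show "vector_space (\<lambda>c (v :: nat \<Rightarrow> 'k) i. c * v i)" by (rule vector_space_fun)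
  fix x y show "l0_pairing (x + y) = l0_pairing x + l0_pairing y"
    by (rule ext) (auto simp: l0_pairing_def br_add_left dualsp_add[OF l0_dual] br_in_h nth_in_h)
next
  fix c x show "l0_pairing (c *s x) = (\<lambda>i. c * l0_pairing x i)"
    by (rule ext) (auto simp: l0_pairing_def br_scale_left dualsp_scale[OF l0_dual] br_in_h nth_in_h)
qed

lemma l0_pairing_eq_0_imp_stab: "l0_pairing w = 0 \<Longrightarrow> w \<in> stab br h l0"
proof -
  assume w: "l0_pairing w = 0"
  have "l0 (br w \<eta>) = 0" if "\<eta> \<in> h" for \<eta>
  proof -
    have "br w \<eta> = (\<Sum>i<m. coord i \<eta> *s br w (bs ! i))"
      by (subst h_expansion[OF that]) (simp add: br_sum_right br_scale_right)
    then have "l0 (br w \<eta>) = (\<Sum>i<m. coord i \<eta> * l0 (br w (bs ! i)))"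
      using dualsp_sum_h[OF l0_dual, of "{..<m}" "\<lambda>i. br w (bs ! i)"] br_in_h nth_in_h by simp
    moreover have "l0 (br w (bs ! i)) = 0" if "i < m" for i
      using fun_cong[OF w, of i] that by (simp add: l0_pairing_def)
    ultimately show ?thesis by simp
  qed
  then show ?thesis by (simp add: stab_def)
qed

lemma inj_on_l0_pairing: "inj_on l0_pairing (span (set (drop d bs)))"
proof -
  have "z = 0" if z: "z \<in> span (set (drop d bs))" "l0_pairing z = 0" for z
  proof -
    have "coord i z = 0" if "i < N" for i
    proof (cases "i < d")
      case True then show ?thesis using coord_span_drop[OF z(1)] that by blast
    next
      case False then show ?thesis
        using coord_span_take stab_l0_subset l0_pairing_eq_0_imp_stab[OF z(2)] that by auto
    qed
    then show "z = 0" using coord_expansion[of z] by simp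
  qed
  moreover have "l0_pairing (x - y) = 0" if "l0_pairing x = l0_pairing y" for x y
  proof -
    have "l0_pairing (x - y + y) = l0_pairing (x - y) + l0_pairing y"
      using linear_l0_pairing unfolding Vector_Spaces.linear_iff by blast
    then show ?thesis using that by simp
  qed
  ultimately show ?thesis
    by (intro inj_onI) (metis eq_iff_diff_eq_0 span_diff)
qed

text \<open>The pairing (\<xi>, \<eta>) \<mapsto> l0 [\<xi>, \<eta>] has no kernel in span (drop d bs), since that space meets
  St(l0) trivially; hence h contains a family dual to b_d, ..., b_(N-1).\<close>
lemma exists_dual_family:
  "\<exists>eta. (\<forall>k. eta k \<in> h) \<and> (\<forall>k<r. \<forall>j<r. l0 (br (bs ! (d + j)) (eta k)) = (if k = j then 1 else 0))"
proof -
  interpret pair: vector_space_pair scale "\<lambda>c (v :: nat \<Rightarrow> 'k) i. c * v i"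
    by (simp add: vector_space_pair_def vector_space_fun vector_space_axioms)
  obtain g where g: "Vector_Spaces.linear (\<lambda>c v i. c * v i) scale g"
    "\<And>x. x \<in> span (set (drop d bs)) \<Longrightarrow> g (l0_pairing x) = x"
    using pair.linear_inj_on_left_inverse[OF linear_l0_pairing inj_on_l0_pairing] by blast
  define unit :: "nat \<Rightarrow> nat \<Rightarrow> 'k" where "unit i = (\<lambda>i'. of_bool (i' = i))" for i
  define eta where "eta k = (\<Sum>i<m. coord (d + k) (g (unit i)) *s bs ! i)" for k
  have g_add: "g (u + v) = g u + g v" and g_scale: "g (\<lambda>i. c * v i) = c *s g v" for u v c
    using g(1) unfolding Vector_Spaces.linear_iff by blast+
  have g_sum: "g (\<Sum>i\<in>A. (\<lambda>i'. c i * v i i')) = (\<Sum>i\<in>A. c i *s g (v i))" for A c v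
  proof (induction A rule: infinite_finite_induct)
    case (insert x F) then show ?case by (simp only: sum.insert[OF insert.hyps] g_add g_scale insert.IH)
  qed (use g_scale[of 0 "\<lambda>_. 0"] in simp_all)
  have "l0 (br (bs ! (d + j)) (eta k)) = (if k = j then 1 else 0)" if "k < r" "j < r" for j k
  proof -
    let ?b = "bs ! (d + j)"
    have "l0 (br ?b (eta k)) = (\<Sum>i<m. coord (d + k) (g (unit i)) * l0 (br ?b (bs ! i)))"
      using dualsp_sum_h[OF l0_dual, of "{..<m}" "\<lambda>i. br ?b (bs ! i)"] br_in_h nth_in_h
      by (simp add: eta_def br_sum_right br_scale_right)
    also have "\<dots> = coord (d + k) (\<Sum>i<m. l0_pairing ?b i *s g (unit i))"
      by (simp add: coord_sum coord_scale l0_pairing_def mult.commute)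
    also have "\<dots> = coord (d + k) (g (\<Sum>i<m. (\<lambda>i'. l0_pairing ?b i * unit i i')))"
      by (simp only: g_sum)
    also have "(\<Sum>i<m. (\<lambda>i'. l0_pairing ?b i * unit i i')) = l0_pairing ?b"
    proof
      fix i'
      have "{..<m} \<inter> {i. i' = i} = (if i' < m then {i'} else {})" by auto
      then show "(\<Sum>i<m. (\<lambda>i'. l0_pairing ?b i * unit i i')) i' = l0_pairing ?b i'"
        by (simp add: unit_def l0_pairing_def sum_fun_apply)
    qed
    also have "g (l0_pairing ?b) = ?b"
      using that length_bs d_le_N by (intro g(2) span_base) (auto simp: r_def in_set_conv_nth intro!: exI[of _ j])
    finally show ?thesis using that by (simp add: coord_basis r_def)
  qed
  moreover have "eta k \<in> h" for k
    unfolding eta_def using nth_in_h by (intro subspace_sum[OF subspace_h] subspace_scale[OF subspace_h]) auto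
  ultimately show ?thesis by blast
qed

definition eta :: "nat \<Rightarrow> 'g" where
  "eta = (SOME eta. (\<forall>k. eta k \<in> h) \<and>
     (\<forall>k<r. \<forall>j<r. l0 (br (bs ! (d + j)) (eta k)) = (if k = j then 1 else 0)))"

lemma eta_in_h: "eta k \<in> h"
  using someI_ex[OF exists_dual_family] by (simp add: eta_def)

lemma l0_br_eta: "k < r \<Longrightarrow> j < r \<Longrightarrow> l0 (br (bs ! (d + j)) (eta k)) = (if k = j then 1 else 0)"
  using someI_ex[OF exists_dual_family] by (simp add: eta_def)

section \<open>The stationary sections\<close>

definition pairing_mat :: "('g \<Rightarrow> 'k) \<Rightarrow> 'k mat" where
  "pairing_mat l = mat r r (\<lambda>(k, j). l (br (bs ! (d + j)) (eta k)))"

definition pairing_det :: "('g \<Rightarrow> 'k) \<Rightarrow> 'k" where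
  "pairing_det l = det (pairing_mat l)"

definition xi_coeff :: "nat \<Rightarrow> ('g \<Rightarrow> 'k) \<Rightarrow> nat \<Rightarrow> 'k" where
  "xi_coeff j l i = - (\<Sum>k<r. adj_mat (pairing_mat l) $$ (i, k) * l (br (bs ! j) (eta k)))"

text \<open>By Cramer's rule, for \<open>pairing_det l \<noteq> 0\<close> the vector \<open>xi j l\<close> is \<open>pairing_det l\<close> times the
  unique vector whose first d coordinates are those of b_j and which satisfies
  \<open>l [\<cdot>, eta k] = 0\<close> for all k < r.\<close>
definition xi :: "nat \<Rightarrow> ('g \<Rightarrow> 'k) \<Rightarrow> 'g" where
  "xi j l = pairing_det l *s bs ! j + (\<Sum>i<r. xi_coeff j l i *s bs ! (d + i))"

lemma pairing_mat_carrier: "pairing_mat l \<in> carrier_mat r r"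
  by (simp add: pairing_mat_def)

lemma pairing_mat_entry: "k < r \<Longrightarrow> j < r \<Longrightarrow> pairing_mat l $$ (k, j) = l (br (bs ! (d + j)) (eta k))"
  by (simp add: pairing_mat_def)

lemma pairing_det_l0: "pairing_det l0 = 1"
proof -
  have "pairing_mat l0 = 1\<^sub>m r"
    by (rule eq_matI) (auto simp: pairing_mat_entry l0_br_eta pairing_mat_def)
  then show ?thesis by (simp add: pairing_det_def)
qed

lemma polyfun_pairing_mat: "k < r \<Longrightarrow> j < r \<Longrightarrow> (\<lambda>l. pairing_mat l $$ (k, j)) \<in> polyfun h"
  by (simp add: pairing_mat_entry polyfun.eval br_in_h eta_in_h)

lemma nonzero_polyfun_pairing_det: "nonzero_polyfun scale h pairing_det"
  using polyfun_det[OF pairing_mat_carrier polyfun_pairing_mat] pairing_det_l0 l0_dual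
  unfolding nonzero_polyfun_def pairing_det_def[abs_def] by force

lemma polyfun_xi_coeff: "i < r \<Longrightarrow> (\<lambda>l. xi_coeff j l i) \<in> polyfun h"
  unfolding xi_coeff_def
  using polyfun_adj_mat[OF pairing_mat_carrier polyfun_pairing_mat]
  by (intro polyfun_cmult[of _ h "-1", simplified] polyfun_sum)
    (auto intro!: polyfun.mult polyfun.eval br_in_h eta_in_h)

lemma l_br_sum_nth_eta:
  "l \<in> dualsp scale h \<Longrightarrow> k < r \<Longrightarrow>
    l (br (\<Sum>i<r. a i *s bs ! (d + i)) (eta k)) = (\<Sum>i<r. a i * pairing_mat l $$ (k, i))"
  using dualsp_sum_h[of l "{..<r}" "\<lambda>i. br (bs ! (d + i)) (eta k)" a] br_in_h eta_in_h
  by (simp add: br_sum_left br_scale_left pairing_mat_entry)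

lemma l_br_xi_eta:
  assumes l: "l \<in> dualsp scale h" and k: "k < r"
  shows "l (br (xi j l) (eta k)) = 0"
proof -
  let ?M = "pairing_mat l" and ?u = "\<lambda>k. l (br (bs ! j) (eta k))"
  have "l (br (xi j l) (eta k)) = pairing_det l * ?u k + (\<Sum>i<r. xi_coeff j l i * ?M $$ (k, i))"
    using l_br_sum_nth_eta[OF l k, of "xi_coeff j l"] br_in_h[OF eta_in_h] subspace_h
    by (simp add: xi_def br_add_left br_scale_left dualsp_add[OF l] dualsp_scale[OF l]
        subspace_sum subspace_scale)
  also have "(\<Sum>i<r. xi_coeff j l i * ?M $$ (k, i)) =
      - (\<Sum>i<r. \<Sum>k'<r. ?M $$ (k, i) * adj_mat ?M $$ (i, k') * ?u k')"
    by (simp add: xi_coeff_def sum_distrib_left sum_distrib_right sum_negf algebra_simps)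
  also have "\<dots> = - (\<Sum>k'<r. (\<Sum>i<r. ?M $$ (k, i) * adj_mat ?M $$ (i, k')) * ?u k')"
    by (subst sum.swap) (simp add: sum_distrib_right)
  also have "\<dots> = - (\<Sum>k'<r. (if k = k' then pairing_det l else 0) * ?u k')"
    unfolding pairing_det_def using k by (simp add: mat_mult_adj_mat_entry[OF pairing_mat_carrier])
  also have "\<dots> = - (pairing_det l * ?u k)"
    using k by (simp add: sum_delta_mult)
  finally show ?thesis by simp
qed

lemma tail_expansion:
  assumes "\<And>i. i < d \<Longrightarrow> coord i v = 0"
  shows "v = (\<Sum>i<r. coord (d + i) v *s bs ! (d + i))"
proof -
  have "v = (\<Sum>i<N. coord i v *s bs ! i)" by (rule coord_expansion)
  also have "\<dots> = (\<Sum>i\<in>{d..<N}. coord i v *s bs ! i)"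
    using assms d_le_N by (intro sum.mono_neutral_right) auto
  also have "\<dots> = (\<Sum>i<r. coord (d + i) v *s bs ! (d + i))"
    using sum.atLeastLessThan_shift_0[of "\<lambda>i. coord i v *s bs ! i" d N]
    by (simp add: r_def atLeast0LessThan comp_def)
  finally show ?thesis .
qed

lemma eq_zero_by_pairing_det:
  assumes l: "l \<in> dualsp scale h" and D: "pairing_det l \<noteq> 0"
    and head: "\<And>i. i < d \<Longrightarrow> coord i v = 0" and orth: "v \<in> stab br (eta ` {..<r}) l"
  shows "v = 0"
proof -
  define a where "a i = coord (d + i) v" for i
  let ?M = "pairing_mat l"
  have v: "v = (\<Sum>i<r. a i *s bs ! (d + i))"
    unfolding a_def by (rule tail_expansion[OF head])
  have Ma: "(\<Sum>i<r. a i * ?M $$ (k, i)) = 0" if k: "k < r" for k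
  proof -
    have "l (br v (eta k)) = (\<Sum>i<r. a i * ?M $$ (k, i))"
      by (subst v) (rule l_br_sum_nth_eta[OF l k])
    then show ?thesis using orth k by (auto simp: stab_def)
  qed
  have "a i' = 0" if i': "i' < r" for i'
  proof -
    have "0 = (\<Sum>k<r. adj_mat ?M $$ (i', k) * (\<Sum>i<r. a i * ?M $$ (k, i)))" using Ma by simp
    also have "\<dots> = (\<Sum>k<r. \<Sum>i<r. adj_mat ?M $$ (i', k) * ?M $$ (k, i) * a i)"
      by (simp add: sum_distrib_left mult_ac)
    also have "\<dots> = (\<Sum>i<r. \<Sum>k<r. adj_mat ?M $$ (i', k) * ?M $$ (k, i) * a i)"
      by (rule sum.swap)
    also have "\<dots> = (\<Sum>i<r. (\<Sum>k<r. adj_mat ?M $$ (i', k) * ?M $$ (k, i)) * a i)"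
      by (simp add: sum_distrib_right)
    also have "\<dots> = (\<Sum>i<r. (if i' = i then pairing_det l else 0) * a i)"
      unfolding pairing_det_def using i' by (simp add: adj_mat_mult_mat_entry[OF pairing_mat_carrier])
    also have "\<dots> = pairing_det l * a i'" using i' by (simp add: sum_delta_mult)
    finally show ?thesis using D by simp
  qed
  then show ?thesis by (subst v) simp
qed

lemma coord_xi: "i < d \<Longrightarrow> j < N \<Longrightarrow> coord i (xi j l) = (if i = j then pairing_det l else 0)"
proof -
  assume i: "i < d" and j: "j < N"
  have "coord i (\<Sum>i'<r. xi_coeff j l i' *s bs ! (d + i')) = (\<Sum>i'<r. xi_coeff j l i' * coord i (bs ! (d + i')))"
    by (simp add: coord_sum coord_scale)
  also have "\<dots> = 0" using i d_le_N by (intro sum.neutral) (auto simp: coord_basis r_def)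
  finally show ?thesis using i j d_le_N by (simp add: xi_def coord_add coord_scale coord_basis)
qed

lemma stab_subset_stab_eta: "stab br h l \<subseteq> stab br (eta ` {..<r}) l"
  using stab_antimono eta_in_h by blast

lemma xi_in_stab_eta: "l \<in> dualsp scale h \<Longrightarrow> xi j l \<in> stab br (eta ` {..<r}) l"
  using l_br_xi_eta by (auto simp: stab_def)

definition head :: "'g \<Rightarrow> 'g" where
  "head v = (\<Sum>i<d. coord i v *s bs ! i)"

lemma module_hom_head: "module_hom scale scale head"
proof -
  have "Vector_Spaces.linear scale scale head"
    unfolding Vector_Spaces.linear_iff
  proof (intro conjI allI)
    fix x y show "head (x + y) = head x + head y"
      by (simp add: head_def coord_add scale_left_distrib sum.distrib)
  next
    fix c x show "head (c *s x) = c *s head x"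
      by (simp add: head_def coord_scale scale_sum_right)
  qed (rule vector_space_axioms)+
  then show ?thesis by (simp add: module_hom_iff_linear)
qed

lemma coord_head: "i < d \<Longrightarrow> coord i (head v) = coord i v"
  using sum_coord_basis[of i d "\<lambda>i. coord i v"] d_le_N
  by (simp add: head_def coord_sum coord_scale mult.commute)

lemma head_in_span_take: "head v \<in> span (set (take d bs))"
  unfolding head_def using nth_in_span_take d_le_N by (intro span_sum span_scale) auto

lemma dim_span_take_d: "dim (span (set (take d bs))) = d"
proof -
  have "independent (set (take d bs))"
    using independent_bs by (rule independent_mono) (simp add: set_take_subset)
  then have "dim (span (set (take d bs))) = card (set (take d bs))"
    using dim_span_eq_card_independent by metis
  also have "\<dots> = d" using distinct_bs length_bs d_le_N by (simp add: distinct_card)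
  finally show ?thesis .
qed

text \<open>By \<open>eq_zero_by_pairing_det\<close> the head projection is injective on St(l), hence onto for
  dimension reasons.\<close>
lemma span_take_subset_head_stab:
  assumes l: "l \<in> dualsp scale h" and D: "pairing_det l \<noteq> 0" and dim: "dim (stab br h l) = d"
  shows "span (set (take d bs)) \<subseteq> head ` stab br h l"
proof -
  interpret fd: finite_dimensional_vector_space scale "set bs"
    by unfold_locales (simp_all add: independent_bs span_bs)
  interpret head: module_hom scale scale head by (rule module_hom_head)
  let ?S = "stab br h l"
  have S: "subspace ?S" using subspace_stab[OF l] by simp
  obtain B where B: "B \<subseteq> ?S" "independent B" "?S \<subseteq> span B" "card B = d"
    using basis_exists dim by blast
  have span_B: "span B = ?S" using B S span_minimal by (meson subset_antisym)
  have inj: "inj_on head (span B)"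
  proof (rule inj_onI)
    fix x y assume x: "x \<in> span B" and y: "y \<in> span B" and e: "head x = head y"
    have "x - y \<in> ?S" using x y span_B subspace_diff[OF S] by auto
    moreover have "head (x - y) = 0" using e head.diff by simp
    ultimately have "x - y = 0"
      using coord_head[of _ "x - y"] stab_subset_stab_eta by (intro eq_zero_by_pairing_det[OF l D]) auto
    then show "x = y" by simp
  qed
  have indep: "independent (head ` B)" using head.independent_injective_image[OF B(2) inj] .
  have card: "card (head ` B) = d" using card_image[OF inj_on_subset[OF inj span_superset]] B(4) by simp
  have "span (set (take d bs)) \<subseteq> span (head ` B)"
    by (rule fd.card_ge_dim_independent) (use head_in_span_take indep card dim_span_take_d in auto)
  also have "\<dots> = head ` ?S" using head.span_image span_B by simp
  finally show ?thesis .
qed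

lemma xi_in_stab:
  assumes l: "l \<in> dualsp scale h" and D: "pairing_det l \<noteq> 0" and dim: "dim (stab br h l) = d"
    and j: "j < d"
  shows "xi j l \<in> stab br h l"
proof -
  let ?E = "stab br (eta ` {..<r}) l"
  have E: "subspace ?E" using subspace_stab[OF l] eta_in_h by blast
  obtain s where s: "s \<in> stab br h l" "head s = bs ! j"
    using span_take_subset_head_stab[OF l D dim] nth_in_span_take[OF j d_le_N] by auto
  have "xi j l - pairing_det l *s s = 0"
  proof (rule eq_zero_by_pairing_det[OF l D])
    fix i assume i: "i < d"
    have "coord i s = (if i = j then 1 else 0)"
      using coord_head[OF i, of s] s i j d_le_N by (simp add: coord_basis)
    then show "coord i (xi j l - pairing_det l *s s) = 0"
      using i j d_le_N by (simp add: coord_diff coord_scale coord_xi)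
  next
    show "xi j l - pairing_det l *s s \<in> ?E"
      using xi_in_stab_eta[OF l] stab_subset_stab_eta s(1)
      by (intro subspace_diff[OF E] subspace_scale[OF E]) auto
  qed
  then show ?thesis using subspace_scale[OF subspace_stab[OF l order_refl] s(1)] by simp
qed

section \<open>A basis of L_h\<close>

definition extend_dual :: "('g \<Rightarrow> 'k) \<Rightarrow> 'g \<Rightarrow> 'k" where
  "extend_dual l v = (\<Sum>k<m. coord k v * l (bs ! k))"

lemma extend_dual_in_dualsp: "extend_dual l \<in> dualsp scale UNIV"
  by (simp add: dualsp_def extend_dual_def coord_add coord_scale distrib_right sum.distrib
      sum_distrib_left mult.assoc)

lemma restr_extend_dual: "l \<in> dualsp scale h \<Longrightarrow> restr h (extend_dual l) = l"
proof
  fix v assume l: "l \<in> dualsp scale h"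
  show "restr h (extend_dual l) v = l v"
  proof (cases "v \<in> h")
    case True
    then have "l v = (\<Sum>k<m. coord k v * l (bs ! k))"
      using dualsp_sum_h[OF l, of "{..<m}" "\<lambda>k. bs ! k" "\<lambda>k. coord k v"] nth_in_h h_expansion
      by auto
    then show ?thesis using True by (simp add: restr_def extend_dual_def)
  next
    case False then show ?thesis using dualsp_outside[OF l] by (simp add: restr_def)
  qed
qed

lemma nonzero_polyfun_restr:
  assumes "nonzero_polyfun scale h p"
  shows "nonzero_polyfun scale UNIV (\<lambda>x. p (restr h x))"
proof -
  obtain l where "p \<in> polyfun h" "l \<in> dualsp scale h" "p l \<noteq> 0"
    using assms by (auto simp: nonzero_polyfun_def)
  then show ?thesis
    using polyfun_restr extend_dual_in_dualsp restr_extend_dual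
    by (auto simp: nonzero_polyfun_def intro!: bexI[of _ "extend_dual l"])
qed

lemma nonzero_polyfun_eval_nth0: "nonzero_polyfun scale h (\<lambda>l. l (bs ! 0))"
proof -
  have b0: "bs ! 0 \<in> h" using nth_in_h m_pos by simp
  define e where "e v = (if v \<in> h then coord 0 v else 0)" for v
  have "e \<in> dualsp scale h"
    using subspace_add[OF subspace_h] subspace_scale[OF subspace_h]
    by (auto simp: dualsp_def e_def coord_add coord_scale)
  moreover have "e (bs ! 0) = 1" using b0 m_pos m_le_d d_le_N by (simp add: e_def coord_basis)
  ultimately show ?thesis using b0 by (auto simp: nonzero_polyfun_def intro!: polyfun.eval bexI[of _ e])
qed

text \<open>A rational function on h* that vanishes on the image of a nonempty Zariski open subset
  of g* vanishes generically: otherwise numerator times denominator, pulled back to g*,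
  would be nonzero somewhere on that open set.\<close>
lemma ratfun_generic_zero:
  assumes \<phi>: "ratfun scale h \<phi>" and R: "nonzero_polyfun scale UNIV R"
    and zero: "\<And>x. x \<in> dualsp scale UNIV \<Longrightarrow> R x \<noteq> 0 \<Longrightarrow> \<phi> (restr h x) = 0"
  shows "generic scale h (\<lambda>l. \<phi> l = 0)"
proof -
  obtain p q where p: "p \<in> polyfun h" and q: "nonzero_polyfun scale h q"
    and pq: "\<And>l. l \<in> dualsp scale h \<Longrightarrow> q l \<noteq> 0 \<Longrightarrow> \<phi> l = p l / q l"
    using \<phi> by (auto simp: ratfun_iff)
  have "p l = 0" if l: "l \<in> dualsp scale h" "q l \<noteq> 0" for l
  proof (rule ccontr)
    assume "p l \<noteq> 0"
    then have "nonzero_polyfun scale h p" using p l by (auto simp: nonzero_polyfun_def)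
    then have "nonzero_polyfun scale UNIV (\<lambda>x. p (restr h x) * q (restr h x) * R x)"
      by (intro nonzero_polyfun_mult nonzero_polyfun_restr q R)
    then obtain x where x: "x \<in> dualsp scale UNIV" "p (restr h x) * q (restr h x) * R x \<noteq> 0"
      by (auto simp: nonzero_polyfun_def)
    then show False
      using zero[OF x(1)] pq[OF restr_in_dualsp[OF x(1)]] by simp
  qed
  then show ?thesis using pq by (intro genericI[OF q]) simp
qed

definition sections :: "(('g \<Rightarrow> 'k) \<Rightarrow> 'g) list" where
  "sections = (\<lambda>l. bs ! 0) # map xi [m..<d]"

lemma length_sections: "length sections = Suc (d - m)"
  by (simp add: sections_def)

lemma sum_sections:
  "(\<Sum>i<Suc (d - m). f i (sections ! i)) = f 0 (\<lambda>l. bs ! 0) + (\<Sum>t<d - m. f (Suc t) (xi (m + t)))"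
  by (simp only: sum.lessThan_Suc_shift) (simp add: sections_def)

lemma sum_sections_coord:
  assumes t: "t < d - m"
  shows "(\<Sum>i<Suc (d - m). c i * coord (m + t) ((sections ! i) l)) = c (Suc t) * pairing_det l"
proof -
  have "(\<Sum>t'<d - m. c (Suc t') * coord (m + t) (xi (m + t') l)) =
      (\<Sum>t'<d - m. if t' = t then c (Suc t) * pairing_det l else 0)"
    using t d_le_N by (intro sum.cong) (auto simp: coord_xi)
  then show ?thesis
    using t m_pos d_le_N unfolding sum_sections[of "\<lambda>i \<Psi>. c i * coord (m + t) (\<Psi> l)"]
    by (simp add: coord_basis)
qed

lemma dualsp_add_coord: "x \<in> dualsp scale UNIV \<Longrightarrow> (\<lambda>v. x v + c * coord j v) \<in> dualsp scale UNIV"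
  by (simp add: dualsp_def coord_add coord_scale algebra_simps)

lemma restr_add_coord: "m \<le> j \<Longrightarrow> j < N \<Longrightarrow> restr h (\<lambda>v. x v + c * coord j v) = restr h x"
  using coord_h by (auto simp: restr_def)

lemma nonzero_polyfun_translate_coord:
  assumes Q: "nonzero_polyfun scale UNIV Q"
  shows "nonzero_polyfun scale UNIV (\<lambda>x. Q (\<lambda>v. x v + coord j v))"
proof -
  obtain x0 where x0: "x0 \<in> dualsp scale UNIV" "Q x0 \<noteq> 0" using Q by (auto simp: nonzero_polyfun_def)
  have "(\<lambda>v. x0 v + (-1) * coord j v) \<in> dualsp scale UNIV" by (rule dualsp_add_coord[OF x0(1)])
  then show ?thesis
    using x0 polyfun_translate[of Q UNIV "\<lambda>v. coord j v"] Q
    by (auto simp: nonzero_polyfun_def intro!: bexI[of _ "\<lambda>v. x0 v + (-1) * coord j v"])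
qed

abbreviation section_relation :: "(('g \<Rightarrow> 'k) \<Rightarrow> 'k) list \<Rightarrow> ('g \<Rightarrow> 'k) \<Rightarrow> 'k" where
  "section_relation \<phi>s x \<equiv> \<Sum>i<Suc (d - m). (\<phi>s ! i) (restr h x) * fPsi h (sections ! i) x"

text \<open>Translating x by the coordinate functional of b_(m+t) does not change its restriction to h,
  and changes the relation by a multiple of the coefficient of xi (m + t).\<close>
lemma section_relation_coeff_xi_zero:
  assumes rel: "generic scale UNIV (\<lambda>x. section_relation \<phi>s x = 0)"
    and \<phi>: "ratfun scale h (\<phi>s ! Suc t)" and t: "t < d - m"
  shows "generic scale h (\<lambda>l. (\<phi>s ! Suc t) l = 0)"
proof -
  define j where "j = m + t"
  have j: "m \<le> j" "j < N" using t d_le_N by (auto simp: j_def)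
  obtain Q where Q: "nonzero_polyfun scale UNIV Q"
    and QR: "\<And>x. x \<in> dualsp scale UNIV \<Longrightarrow> Q x \<noteq> 0 \<Longrightarrow> section_relation \<phi>s x = 0"
    using rel by (rule genericE) blast
  let ?shift = "\<lambda>x v. x v + 1 * coord j v"
  have "nonzero_polyfun scale UNIV (\<lambda>x. Q x * Q (?shift x) * pairing_det (restr h x))"
    using nonzero_polyfun_translate_coord[OF Q, of j]
    by (intro nonzero_polyfun_mult nonzero_polyfun_restr Q nonzero_polyfun_pairing_det) simp
  then show ?thesis
  proof (rule ratfun_generic_zero[OF \<phi>])
    fix x assume x: "x \<in> dualsp scale UNIV" and R: "Q x * Q (?shift x) * pairing_det (restr h x) \<noteq> 0"
    define l where "l = restr h x"
    have "(\<Sum>i<Suc (d - m). (\<phi>s ! i) l * x ((sections ! i) l)) = 0"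
      using QR[OF x] R by (simp add: fPsi_def l_def del: sum.lessThan_Suc)
    moreover have "(\<Sum>i<Suc (d - m). (\<phi>s ! i) l * (x ((sections ! i) l) + coord j ((sections ! i) l))) = 0"
      using QR[OF dualsp_add_coord[OF x, of 1 j]] R restr_add_coord[OF j, of x 1]
      by (simp add: fPsi_def l_def del: sum.lessThan_Suc)
    ultimately have "(\<Sum>i<Suc (d - m). (\<phi>s ! i) l * coord j ((sections ! i) l)) = 0"
      by (simp add: distrib_left sum.distrib del: sum.lessThan_Suc)
    then have "(\<phi>s ! Suc t) l * pairing_det l = 0"
      using sum_sections_coord[OF t, of "\<lambda>i. (\<phi>s ! i) l" l] by (simp add: j_def)
    then show "(\<phi>s ! Suc t) (restr h x) = 0" using R by (simp add: l_def)
  qed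
qed

lemma section_relation_coeff_const_zero:
  assumes rel: "generic scale UNIV (\<lambda>x. section_relation \<phi>s x = 0)"
    and \<phi>: "ratfun scale h (\<phi>s ! 0)"
    and xi_zero: "generic scale h (\<lambda>l. \<forall>t\<in>{..<d - m}. (\<phi>s ! Suc t) l = 0)"
  shows "generic scale h (\<lambda>l. (\<phi>s ! 0) l = 0)"
proof -
  obtain Q where Q: "nonzero_polyfun scale UNIV Q"
    and QR: "\<And>x. x \<in> dualsp scale UNIV \<Longrightarrow> Q x \<noteq> 0 \<Longrightarrow> section_relation \<phi>s x = 0"
    using rel by (rule genericE) blast
  obtain G where G: "nonzero_polyfun scale h G"
    and GZ: "\<And>l. l \<in> dualsp scale h \<Longrightarrow> G l \<noteq> 0 \<Longrightarrow> \<forall>t\<in>{..<d - m}. (\<phi>s ! Suc t) l = 0"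
    using xi_zero by (rule genericE) blast
  have "nonzero_polyfun scale UNIV (\<lambda>x. Q x * G (restr h x) * restr h x (bs ! 0))"
    by (intro nonzero_polyfun_mult nonzero_polyfun_restr Q G nonzero_polyfun_eval_nth0)
  then show ?thesis
  proof (rule ratfun_generic_zero[OF \<phi>])
    fix x assume x: "x \<in> dualsp scale UNIV" and R: "Q x * G (restr h x) * restr h x (bs ! 0) \<noteq> 0"
    define l where "l = restr h x"
    have "(\<phi>s ! 0) l * x (bs ! 0) + (\<Sum>t<d - m. (\<phi>s ! Suc t) l * x (xi (m + t) l)) = 0"
      using QR[OF x] R sum_sections[of "\<lambda>i \<Psi>. (\<phi>s ! i) l * x (\<Psi> l)"] by (simp add: fPsi_def l_def)
    moreover have "(\<phi>s ! Suc t) l = 0" if "t < d - m" for t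
      using GZ[OF restr_in_dualsp[OF x]] R that by (simp add: l_def)
    moreover have "x (bs ! 0) = l (bs ! 0)" using nth_in_h m_pos by (simp add: l_def restr_def)
    ultimately show "(\<phi>s ! 0) (restr h x) = 0" using R by (simp add: l_def)
  qed
qed

lemma sections_independent:
  assumes "length \<phi>s = Suc (d - m)" "\<forall>\<phi>\<in>set \<phi>s. ratfun scale h \<phi>"
    and rel: "generic scale UNIV (\<lambda>x. section_relation \<phi>s x = 0)"
  shows "\<forall>i<Suc (d - m). generic scale h (\<lambda>l. (\<phi>s ! i) l = 0)"
proof -
  have \<phi>: "ratfun scale h (\<phi>s ! i)" if "i < Suc (d - m)" for i
    using assms(1,2) that by auto
  have xi_zero: "generic scale h (\<lambda>l. (\<phi>s ! Suc t) l = 0)" if "t < d - m" for t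
    using section_relation_coeff_xi_zero[OF rel \<phi> that] that by simp
  then have "generic scale h (\<lambda>l. \<forall>t\<in>{..<d - m}. (\<phi>s ! Suc t) l = 0)"
    by (intro generic_Ball) auto
  then have "generic scale h (\<lambda>l. (\<phi>s ! 0) l = 0)"
    using section_relation_coeff_const_zero[OF rel \<phi>[of 0]] by simp
  then show ?thesis using xi_zero by (auto simp: less_Suc_eq_0_disj)
qed

lemma rat_section_const: "v \<in> h \<Longrightarrow> rat_section scale br h (\<lambda>l. v)"
  unfolding rat_section_def
proof
  show "ratmap scale h (\<lambda>l. v)" unfolding ratmap_def
    using l0_dual polyfun.const[of 1 h]
    by (intro bexI[of _ "\<lambda>l. 1"] exI[of _ "[\<lambda>l. 1]"] exI[of _ "[v]"]) auto
  assume "v \<in> h"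
  then show "generic scale h (\<lambda>l. v \<in> stab br h l)"
    using h_subset_stab by (intro genericI[OF nonzero_polyfun_const[of 1]]) auto
qed

lemma ratmap_xi: "ratmap scale h (xi j)"
proof -
  let ?ps = "pairing_det # map (\<lambda>i l. xi_coeff j l i) [0..<r]"
  let ?vs = "bs ! j # map (\<lambda>i. bs ! (d + i)) [0..<r]"
  have "xi j l = (\<Sum>i<length ?ps. (?ps ! i) l *s ?vs ! i)" for l
    by (simp only: length_Cons sum.lessThan_Suc_shift) (simp add: xi_def)
  moreover have "set ?ps \<subseteq> polyfun h"
    using nonzero_polyfun_pairing_det polyfun_xi_coeff by (auto simp: nonzero_polyfun_def)
  ultimately show ?thesis
    unfolding ratmap_def using l0_dual polyfun.const[of 1 h]
    by (intro bexI[of _ "\<lambda>l. 1"] exI[of _ ?ps] exI[of _ ?vs]) auto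
qed

lemma rat_section_xi:
  assumes dim: "generic scale h (\<lambda>l. dim (stab br h l) = d)" and j: "j < d"
  shows "rat_section scale br h (xi j)"
proof -
  have "generic scale h (\<lambda>l. dim (stab br h l) = d \<and> pairing_det l \<noteq> 0)"
    by (intro generic_conj dim genericI[OF nonzero_polyfun_pairing_det])
  then have "generic scale h (\<lambda>l. xi j l \<in> stab br h l)"
    by (rule generic_mono) (use xi_in_stab j in blast)
  then show ?thesis using ratmap_xi by (simp add: rat_section_def)
qed

lemma sum_coord_xi:
  assumes i: "i < d"
  shows "(\<Sum>t<d - m. a t * coord i (xi (m + t) l)) = (if m \<le> i then a (i - m) * pairing_det l else 0)"
proof -
  have "(\<Sum>t<d - m. a t * coord i (xi (m + t) l)) =
      (\<Sum>t<d - m. if t = i - m \<and> m \<le> i then a t * pairing_det l else 0)"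
    using i d_le_N by (intro sum.cong) (auto simp: coord_xi)
  also have "\<dots> = (if m \<le> i then a (i - m) * pairing_det l else 0)" using i by (auto simp: sum.If_cases)
  finally show ?thesis .
qed

lemma stab_expansion:
  assumes l: "l \<in> dualsp scale h" and D: "pairing_det l \<noteq> 0" and v: "v \<in> stab br h l"
  shows "v = (\<Sum>t<d - m. (coord (m + t) v / pairing_det l) *s xi (m + t) l) + (\<Sum>k<m. coord k v *s bs ! k)"
    (is "v = ?xis + ?hs")
proof -
  let ?E = "stab br (eta ` {..<r}) l"
  have E: "subspace ?E" using subspace_stab[OF l] eta_in_h by blast
  have "v - (?xis + ?hs) = 0"
  proof (rule eq_zero_by_pairing_det[OF l D])
    fix i assume i: "i < d"
    have "coord i (?xis + ?hs) = coord i v"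
      using sum_coord_xi[OF i, of "\<lambda>t. coord (m + t) v / pairing_det l" l]
        sum_coord_basis[of i m "\<lambda>k. coord k v"] i d_le_N m_le_d D
      by (auto simp: coord_add coord_sum coord_scale)
    then show "coord i (v - (?xis + ?hs)) = 0" by (simp add: coord_diff)
  next
    have "?xis \<in> ?E"
      using xi_in_stab_eta[OF l] by (intro subspace_sum[OF E] subspace_scale[OF E]) auto
    moreover have "?hs \<in> ?E"
      using h_subset_stab[OF l] eta_in_h nth_in_h
      by (intro subspace_sum[OF E] subspace_scale[OF E]) blast
    ultimately show "v - (?xis + ?hs) \<in> ?E"
      using v stab_subset_stab_eta by (intro subspace_diff[OF E] subspace_add[OF E]) auto
  qed
  then show ?thesis by simp
qed

lemma eval_stab_expansion:
  assumes x: "x \<in> dualsp scale UNIV" and D: "pairing_det (restr h x) \<noteq> 0"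
    and v: "v \<in> stab br h (restr h x)"
  shows "x v = (\<Sum>t<d - m. (coord (m + t) v / pairing_det (restr h x)) * x (xi (m + t) (restr h x)))
      + (\<Sum>k<m. coord k v * restr h x (bs ! k))"
proof -
  have "x v = (\<Sum>t<d - m. (coord (m + t) v / pairing_det (restr h x)) * x (xi (m + t) (restr h x)))
      + (\<Sum>k<m. coord k v * x (bs ! k))"
    by (subst stab_expansion[OF restr_in_dualsp[OF x] D v])
      (simp add: dualsp_add[OF x] dualsp_sum_UNIV[OF x])
  then show ?thesis using nth_in_h by (simp add: restr_def)
qed

lemma coord_ratmap:
  assumes "ratmap scale h \<Psi>"
  obtains q cn where "nonzero_polyfun scale h q" "\<And>k. cn k \<in> polyfun h"
    "\<And>l k. l \<in> dualsp scale h \<Longrightarrow> q l \<noteq> 0 \<Longrightarrow> coord k (\<Psi> l) = cn k l / q l"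
proof -
  obtain q ps vs where q: "nonzero_polyfun scale h q" and ps: "set ps \<subseteq> polyfun h"
    and \<Psi>: "\<And>l. l \<in> dualsp scale h \<Longrightarrow> q l \<noteq> 0 \<Longrightarrow>
         \<Psi> l = inverse (q l) *s (\<Sum>i<length ps. (ps ! i) l *s vs ! i)"
    using assms unfolding ratmap_def nonzero_polyfun_def by blast
  define cn where "cn k l = (\<Sum>i<length ps. (ps ! i) l * coord k (vs ! i))" for k l
  have "cn k \<in> polyfun h" for k
    unfolding cn_def[abs_def] using ps by (intro polyfun_sum) (auto intro!: polyfun.mult polyfun.const)
  moreover have "coord k (\<Psi> l) = cn k l / q l" if "l \<in> dualsp scale h" "q l \<noteq> 0" for l k
    using \<Psi>[OF that] by (simp add: coord_scale coord_sum cn_def divide_inverse mult.commute)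
  ultimately show ?thesis using q that by blast
qed

lemma sections_span:
  assumes \<Psi>: "rat_section scale br h \<Psi>"
  shows "\<exists>\<phi>s. length \<phi>s = Suc (d - m) \<and> (\<forall>\<phi>\<in>set \<phi>s. ratfun scale h \<phi>) \<and>
      generic scale UNIV (\<lambda>x. fPsi h \<Psi> x = section_relation \<phi>s x)"
proof -
  obtain q cn where q: "nonzero_polyfun scale h q" and cn: "\<And>k. cn k \<in> polyfun h"
    and coord_\<Psi>: "\<And>l k. l \<in> dualsp scale h \<Longrightarrow> q l \<noteq> 0 \<Longrightarrow> coord k (\<Psi> l) = cn k l / q l"
    using \<Psi> coord_ratmap by (auto simp: rat_section_def)
  obtain G where G: "nonzero_polyfun scale h G"
    and G_stab: "\<And>l. l \<in> dualsp scale h \<Longrightarrow> G l \<noteq> 0 \<Longrightarrow> \<Psi> l \<in> stab br h l"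
    using \<Psi> by (auto simp: rat_section_def elim: genericE)
  define \<phi>s where "\<phi>s = (\<lambda>l. (\<Sum>k<m. cn k l * l (bs ! k)) / (q l * l (bs ! 0)))
    # map (\<lambda>j l. cn j l / (q l * pairing_det l)) [m..<d]"
  have "\<forall>\<phi>\<in>set \<phi>s. ratfun scale h \<phi>"
    unfolding \<phi>s_def using nth_in_h
    by (auto intro!: ratfunI polyfun_sum polyfun.mult polyfun.eval cn nonzero_polyfun_mult q
        nonzero_polyfun_eval_nth0 nonzero_polyfun_pairing_det)
  moreover have "generic scale UNIV (\<lambda>x. fPsi h \<Psi> x = section_relation \<phi>s x)"
  proof (rule genericI)
    show "nonzero_polyfun scale UNIV
        (\<lambda>x. q (restr h x) * pairing_det (restr h x) * G (restr h x) * restr h x (bs ! 0))"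
      by (intro nonzero_polyfun_restr nonzero_polyfun_mult q nonzero_polyfun_pairing_det G
          nonzero_polyfun_eval_nth0)
    fix x assume x: "x \<in> dualsp scale UNIV"
      and R: "q (restr h x) * pairing_det (restr h x) * G (restr h x) * restr h x (bs ! 0) \<noteq> 0"
    let ?l = "restr h x"
    have l: "?l \<in> dualsp scale h" by (rule restr_in_dualsp[OF x])
    have "(\<phi>s ! 0) ?l * x (bs ! 0) = (\<Sum>k<m. cn k ?l * ?l (bs ! k)) / q ?l"
      using R nth_in_h m_pos by (simp add: \<phi>s_def restr_def)
    moreover have "(\<phi>s ! Suc t) ?l = cn (m + t) ?l / (q ?l * pairing_det ?l)" if "t < d - m" for t
      using that by (simp add: \<phi>s_def)
    ultimately show "fPsi h \<Psi> x = section_relation \<phi>s x"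
      unfolding fPsi_def sum_sections[of "\<lambda>i \<Psi>. (\<phi>s ! i) ?l * x (\<Psi> ?l)"]
      using eval_stab_expansion[OF x _ G_stab[OF l]] R coord_\<Psi>[OF l]
      by (simp add: sum_divide_distrib)
  qed
  moreover have "length \<phi>s = Suc (d - m)" by (simp add: \<phi>s_def)
  ultimately show ?thesis by blast
qed

lemma L_dim_eq_sections:
  assumes "generic scale h (\<lambda>l. dim (stab br h l) = d)"
  shows "L_dim_eq scale br h (Suc (d - m))"
  unfolding L_dim_eq_def
proof (intro exI[of _ sections] conjI)
  show "length sections = Suc (d - m)" by (rule length_sections)
  show "\<forall>\<Psi>\<in>set sections. rat_section scale br h \<Psi>"
    using rat_section_const[OF nth_in_h] rat_section_xi[OF assms] m_pos by (auto simp: sections_def)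
qed (use sections_independent sections_span in blast)+

end

theorem lemma5:
  fixes scale :: "'k::field_char_0 \<Rightarrow> 'g::ab_group_add \<Rightarrow> 'g"
    and br :: "'g \<Rightarrow> 'g \<Rightarrow> 'g" and h :: "'g set" and d :: nat
  assumes "lie_algebra scale br"
    and "finite_dim scale"
    and "module.subspace scale h"
    and "h \<noteq> {0}"
    and "\<forall>\<xi>. \<forall>\<eta>\<in>h. br \<xi> \<eta> \<in> h"
    and "\<forall>a\<in>h. \<forall>b\<in>h. br a b = 0"
    and "generic scale h (\<lambda>l. vector_space.dim scale (stab br h l) = d)"
  shows "L_dim_eq scale br h (d + 1 - vector_space.dim scale h)"
proof -
  interpret abelian_ideal scale br h
    using assms(1,3,5,6) by (simp add: abelian_ideal_def abelian_ideal_axioms_def lie_algebra_def)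
  obtain l0 where l0: "l0 \<in> dualsp scale h" and dim_l0: "dim (stab br h l0) = d"
    using assms(7) by (auto simp: generic_def)
  obtain B where "finite B" "span B = UNIV" using assms(2) by (auto simp: finite_dim_def)
  then obtain bs where bs: "distinct bs" "independent (set bs)" "span (set bs) = UNIV"
    "span (set (take (dim h) bs)) = h" "span (set (take d bs)) = stab br h l0"
    "dim h \<le> d" "d \<le> length bs"
    using flag_basis_list[OF _ _ subspace_h subspace_stab[OF l0 order_refl] h_subset_stab[OF l0 order_refl]]
    dim_l0 by metis
  have "1 \<le> dim h" using bs(4) assms(4) by (cases "dim h") auto
  then interpret adapted_basis scale br h bs "dim h" d "length bs" l0
    using bs l0 by unfold_locales auto
  show ?thesis using L_dim_eq_sections assms(7) \<open>dim h \<le> d\<close> by (simp add: Suc_diff_le)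
qed

end
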